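(* Fix $\mathbf{x}_0\in\mathcal{X}^*$. Consider the mechanism $M$ that on prompt dataset $D$ does the following: set $\mathbf{x}\gets\mathbf{x}_0$ and $\hat\theta\gets\theta+\mathrm{Laplace}(\sigma)$; then repeat: compute $Z=\{\mathrm{logits}(\mathbf{p}\mathbf{x}):\mathbf{p}\in D\}$, $\mathbf{z}_{\mathrm{pub}}=\mathrm{logits}(\mathbf{p}_{\mathrm{pub}}\mathbf{x})$, $\hat d=\mathrm{d}(Z,\mathbf{z}_{\mathrm{pub}})+\mathrm{Laplace}(2\sigma)$ (fresh noise each time); if $\hat d\ge\hat\theta$, stop and output $\mathbf{x}$; otherwise sample $x\sim\mathrm{softmax}(\mathbf{z}_{\mathrm{pub}}/\tau_{\mathrm{pub}})$, append $x$ to $\mathbf{x}$, and repeat. Then $M$ satisfies $\rho$-zCDP with $\rho=\frac{2}{(s\sigma)^2}$.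
   Context: $\mathcal{X}$ is a finite token vocabulary of size $v$; $\mathcal{X}^*$ denotes finite token sequences; juxtaposition denotes concatenation. $\mathrm{logits}:\mathcal{X}^*\to\mathbb{R}^v$ is an arbitrary fixed function, $\mathbf{p}_{\mathrm{pub}}\in\mathcal{X}^*$ a fixed public prompt, and $s,\sigma,\tau_{\mathrm{pub}}>0$, $\theta\in\mathbb{R}$ fixed. $p_{\mathbf{z}}=\mathrm{softmax}(\mathbf{z})$ is the probability vector with entries $e^{z_i}/\sum_je^{z_j}$, and $\mathrm{d}(Z,\mathbf{z})=\left\|\frac1s\sum_{\mathbf{z}'\in Z}p_{\mathbf{z}'}-p_{\mathbf{z}}\right\|_1$. $\mathrm{Laplace}(b)$ is an independent Laplace random variable with mean $0$ and scale $b$. A prompt dataset is a finite set of prompts; $D,D'$ are neighbors if $D=D'\cup\{\mathbf{p}\}$ or $D'=D\cup\{\mathbf{p}\}$. A mechanism $M$ satisfies $\rho$-zCDP if $D_\alpha(M(D)\|M(D'))\le\rho\alpha$ for all $\alpha>1$ and all neighbors $D,D'$, with $D_\alpha$ the Rényi divergence of order $\alpha$. *)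

theory Defs
  imports "HOL-Probability.Probability"
begin

text \<open>Tokens: a finite type 'a (the vocabulary, v = CARD('a)); sequences: 'a list;
 concatenation: @. Logit vectors: functions 'a \<Rightarrow> real (vectors in R^v).\<close>

definition softmax :: "('a::finite \<Rightarrow> real) \<Rightarrow> 'a \<Rightarrow> real" where
  "softmax z i = exp (z i) / (\<Sum>j\<in>UNIV. exp (z j))"

definition softmax_pmf :: "('a::finite \<Rightarrow> real) \<Rightarrow> 'a pmf" where
  "softmax_pmf z = embed_pmf (softmax z)"

definition dist_d :: "real \<Rightarrow> ('a::finite \<Rightarrow> real) set \<Rightarrow> ('a \<Rightarrow> real) \<Rightarrow> real" where
  "dist_d s Z z = (\<Sum>i\<in>UNIV. \<bar>(1 / s) * (\<Sum>z'\<in>Z. softmax z' i) - softmax z i\<bar>)"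

definition laplace_measure :: "real \<Rightarrow> real \<Rightarrow> real measure" where
  "laplace_measure mu b = density lborel (\<lambda>x. ennreal (exp (- \<bar>x - mu\<bar> / b) / (2 * b)))"

text \<open>Probability that u + Laplace(b) \<ge> t, i.e. P(Laplace(b) \<ge> t - u).\<close>
definition lap_ge :: "real \<Rightarrow> real \<Rightarrow> real" where
  "lap_ge b c = measure (laplace_measure 0 b) {c..}"

text \<open>The loop of the mechanism for a fixed (already noised) threshold t.
 In each round: d_hat = d(Z, z_pub) + Laplace(2 sigma) with fresh noise; stop iff d_hat \<ge> t
 (an event of probability lap_ge (2 sigma) (t - d(Z,z_pub))); otherwise sample the next
 token from softmax(z_pub / tau_pub) and continue.\<close>
partial_function (spmf) svt_loop ::
  "('a::finite list \<Rightarrow> 'a \<Rightarrow> real) \<Rightarrow> 'a list \<Rightarrow> real \<Rightarrow> real \<Rightarrow> real \<Rightarrow>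
   'a list set \<Rightarrow> real \<Rightarrow> 'a list \<Rightarrow> 'a list spmf" where
  "svt_loop logits ppub s \<sigma> \<tau> D t x =
     (let Z = (\<lambda>p. logits (p @ x)) ` D;
          zpub = logits (ppub @ x)
      in bind_spmf (spmf_of_pmf (bernoulli_pmf (lap_ge (2 * \<sigma>) (t - dist_d s Z zpub))))
           (\<lambda>stop. if stop then return_spmf x
                   else bind_spmf (spmf_of_pmf (softmax_pmf (\<lambda>i. zpub i / \<tau>)))
                          (\<lambda>y. svt_loop logits ppub s \<sigma> \<tau> D t (x @ [y]))))"

definition svt_mech ::
  "('a::finite list \<Rightarrow> 'a \<Rightarrow> real) \<Rightarrow> 'a list \<Rightarrow> real \<Rightarrow> real \<Rightarrow> real \<Rightarrow> real \<Rightarrow>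
   'a list \<Rightarrow> 'a list set \<Rightarrow> 'a list measure" where
  "svt_mech logits ppub s \<sigma> \<tau> \<theta> x0 D =
     laplace_measure \<theta> \<sigma> \<bind> (\<lambda>t. measure_spmf (svt_loop logits ppub s \<sigma> \<tau> D t x0))"

definition renyi_div :: "real \<Rightarrow> 'b measure \<Rightarrow> 'b measure \<Rightarrow> ereal" where
  "renyi_div \<alpha> P Q =
     (let S = (\<integral>\<^sup>+ x. ennreal (measure P {x} powr \<alpha> * measure Q {x} powr (1 - \<alpha>)) \<partial>count_space UNIV)
      in if (\<exists>x. measure P {x} > 0 \<and> measure Q {x} = 0) \<or> S = \<infinity> then \<infinity>
         else ereal (ln (enn2real S) / (\<alpha> - 1)))"

definition neighbors :: "'a list set \<Rightarrow> 'a list set \<Rightarrow> bool" where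
  "neighbors D D' \<longleftrightarrow> (\<exists>p. D = D' \<union> {p} \<or> D' = D \<union> {p})"

definition zCDP :: "('a list set \<Rightarrow> 'b measure) \<Rightarrow> real \<Rightarrow> bool" where
  "zCDP M \<rho> \<longleftrightarrow> (\<forall>\<alpha>>1. \<forall>D D'. finite D \<and> finite D' \<and> neighbors D D' \<longrightarrow>
       renyi_div \<alpha> (M D) (M D') \<le> ereal (\<rho> * \<alpha>))"

end

theory Submission
  imports Defs "HOL-Library.Sublist"
begin

text \<open>The only data-dependent quantity in a round of the mechanism is the score \<open>d(Z, z\<^sub>p\<^sub>u\<^sub>b)\<close>,
  and adding one prompt to the dataset changes it by at most \<open>\<Delta> = 1/s\<close>. Compare the run on \<open>D\<close> with
  noisy threshold \<open>t\<close> to the run on a neighbour \<open>D'\<close> with threshold \<open>t + \<Delta>\<close>: every non-halting round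
  is at least as likely for \<open>D'\<close>, the halting round loses at most a factor \<open>exp (\<Delta>/\<sigma>)\<close> of the
  \<open>Laplace(2\<sigma>)\<close> tail, and moving the \<open>Laplace(\<sigma>)\<close> threshold costs another \<open>exp (\<Delta>/\<sigma>)\<close>. So every
  output has probability ratio at most \<open>e\<^sup>\<epsilon>\<close> with \<open>\<epsilon> = 2/(s\<sigma>)\<close>, i.e. the mechanism is pure \<open>\<epsilon>\<close>-DP,
  and pure \<open>\<epsilon>\<close>-DP implies \<open>\<epsilon>\<^sup>2/2\<close>-zCDP: bounding \<open>w\<^sup>\<alpha>\<close> by its secant on \<open>[e\<^sup>-\<^sup>\<epsilon>, e\<^sup>\<epsilon>]\<close> gives
  \<open>\<Sum> p\<^sup>\<alpha> q\<^sup>1\<^sup>-\<^sup>\<alpha> \<le> cosh ((\<alpha> - 1/2)\<epsilon>) / cosh (\<epsilon>/2) \<le> exp (\<alpha>(\<alpha> - 1)\<epsilon>\<^sup>2/2)\<close>.\<close>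

section \<open>The Laplace distribution\<close>

definition laplace_density :: "real \<Rightarrow> real \<Rightarrow> real \<Rightarrow> real" where
  "laplace_density \<mu> b x = exp (- \<bar>x - \<mu>\<bar> / b) / (2 * b)"

lemma borel_measurable_laplace_density [measurable]: "laplace_density \<mu> b \<in> borel_measurable borel"
  unfolding laplace_density_def[abs_def] by measurable

lemma laplace_density_nonneg: "b > 0 \<Longrightarrow> laplace_density \<mu> b x \<ge> 0"
  by (simp add: laplace_density_def)

lemma laplace_measure_eq_density:
  "laplace_measure \<mu> b = density lborel (\<lambda>x. ennreal (laplace_density \<mu> b x))"
  by (simp add: laplace_measure_def laplace_density_def)

lemma sets_laplace_measure [measurable_cong]: "sets (laplace_measure \<mu> b) = sets borel"
  by (simp add: laplace_measure_def)

lemma prob_space_laplace_measure: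
  assumes b: "b > 0"
  shows "prob_space (laplace_measure \<mu> b)"
proof
  let ?e = "exponential_density (1 / b)"
  have e_integral: "(\<integral>\<^sup>+x. ?e x \<partial>lborel) = 1"
  proof -
    interpret prob_space "density lborel ?e"
      by (rule prob_space_exponential_density) (use b in simp)
    show ?thesis
      using emeasure_space_1 by (simp add: emeasure_density)
  qed
  \<comment> \<open>two mirrored exponential densities, overlapping only at \<open>\<mu>\<close>\<close>
  have density_split: "ennreal (laplace_density \<mu> b x)
      = ennreal (1 / 2) * (ennreal (?e (x - \<mu>)) + ennreal (?e (\<mu> - x)))" if "x \<noteq> \<mu>" for x
  proof -
    have "laplace_density \<mu> b x = 1 / 2 * (?e (x - \<mu>) + ?e (\<mu> - x))"
      using that b by (auto simp: laplace_density_def exponential_density_def abs_if field_simps)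
    then show ?thesis
      using b by (simp only:) (subst ennreal_mult; simp add: exponential_density_nonneg)
  qed
  have "emeasure (laplace_measure \<mu> b) (space (laplace_measure \<mu> b))
      = (\<integral>\<^sup>+x. ennreal (laplace_density \<mu> b x) \<partial>lborel)"
    by (simp add: laplace_measure_eq_density emeasure_density)
  also have "\<dots> = (\<integral>\<^sup>+x. ennreal (1 / 2) * (ennreal (?e (x - \<mu>)) + ennreal (?e (\<mu> - x))) \<partial>lborel)"
    by (rule nn_integral_cong_AE, rule eventually_mono[OF AE_lborel_singleton[of \<mu>]]) (rule density_split)
  also have "\<dots> = ennreal (1 / 2) * ((\<integral>\<^sup>+x. ?e (x - \<mu>) \<partial>lborel) + (\<integral>\<^sup>+x. ?e (\<mu> - x) \<partial>lborel))"
    by (simp add: nn_integral_cmult nn_integral_add)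
  also have "(\<integral>\<^sup>+x. ?e (x - \<mu>) \<partial>lborel) = 1"
    using nn_integral_real_affine[of "\<lambda>x. ennreal (?e (x - \<mu>))" 1 \<mu>] e_integral by simp
  also have "(\<integral>\<^sup>+x. ?e (\<mu> - x) \<partial>lborel) = 1"
    using nn_integral_real_affine[of "\<lambda>x. ennreal (?e (\<mu> - x))" "-1" \<mu>] e_integral by simp
  also have "ennreal (1 / 2) * (1 + 1) = 1"
    by (simp only: ennreal_1[symmetric] ennreal_plus[symmetric] ennreal_mult[symmetric]) simp_all
  finally show "emeasure (laplace_measure \<mu> b) (space (laplace_measure \<mu> b)) = 1" .
qed

lemma emeasure_laplace_measure:
  "emeasure (laplace_measure \<mu> b) A = (\<integral>\<^sup>+x. ennreal (laplace_density \<mu> b x) * indicator A x \<partial>lborel)"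
  if "A \<in> sets borel"
  using that by (simp add: laplace_measure_eq_density emeasure_density)

lemma laplace_density_le_shift:
  assumes "b > 0"
  shows "laplace_density \<mu> b x \<le> exp (\<bar>d\<bar> / b) * laplace_density \<mu> b (x + d)"
proof -
  have "- \<bar>x - \<mu>\<bar> / b \<le> \<bar>d\<bar> / b + - \<bar>x + d - \<mu>\<bar> / b"
    using assms by (simp add: field_simps)
  then have "exp (- \<bar>x - \<mu>\<bar> / b) \<le> exp (\<bar>d\<bar> / b) * exp (- \<bar>x + d - \<mu>\<bar> / b)"
    by (simp flip: exp_add)
  then show ?thesis
    using assms by (simp add: laplace_density_def divide_right_mono)
qed

lemma lap_ge_antimono:
  assumes "b > 0" "c \<le> c'"
  shows "lap_ge b c' \<le> lap_ge b c"
proof -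
  interpret prob_space "laplace_measure 0 b"
    using assms(1) by (rule prob_space_laplace_measure)
  show ?thesis
    unfolding lap_ge_def using assms(2) by (intro finite_measure_mono) (auto simp: laplace_measure_def)
qed

lemma borel_measurable_lap_ge:
  assumes "b > 0"
  shows "(\<lambda>c. lap_ge b c) \<in> borel_measurable borel"
proof -
  have "mono (\<lambda>c. - lap_ge b c)"
    using assms by (auto intro!: monoI lap_ge_antimono)
  then have "(\<lambda>c. - (- lap_ge b c)) \<in> borel_measurable borel"
    by (intro borel_measurable_uminus borel_measurable_mono)
  then show ?thesis by simp
qed

lemma lap_ge_le_1: "b > 0 \<Longrightarrow> lap_ge b c \<le> 1"
  unfolding lap_ge_def by (rule prob_space.prob_le_1[OF prob_space_laplace_measure])

lemma lap_ge_pos: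
  assumes b: "b > 0"
  shows "lap_ge b c > 0"
proof -
  interpret prob_space "laplace_measure 0 b"
    using b by (rule prob_space_laplace_measure)
  have "emeasure (laplace_measure 0 b) {c..} \<noteq> 0"
  proof
    assume "emeasure (laplace_measure 0 b) {c..} = 0"
    then have "AE x in lborel. ennreal (laplace_density 0 b x) * indicator {c..} x = 0"
      by (simp add: emeasure_laplace_measure nn_integral_0_iff_AE)
    then have "AE x in lborel. x \<notin> {c..c + 1}"
      by eventually_elim (use b in \<open>auto simp: laplace_density_def indicator_def\<close>)
    then have "emeasure lborel {c..c + 1} = 0"
      by (rule AE_iff_measurable[THEN iffD1, rotated 2]) auto
    then show False by simp
  qed
  then show ?thesis
    by (simp add: lap_ge_def emeasure_eq_measure zero_less_measure_iff)
qed

lemma lap_ge_shift: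
  assumes b: "b > 0" and d: "d \<ge> 0"
  shows "exp (- d / b) * lap_ge b c \<le> lap_ge b (c + d)"
proof -
  interpret prob_space "laplace_measure 0 b"
    using b by (rule prob_space_laplace_measure)
  have "ennreal (exp (- d / b)) * emeasure (laplace_measure 0 b) {c..}
      = (\<integral>\<^sup>+x. ennreal (exp (- d / b) * laplace_density 0 b x) * indicator {c..} x \<partial>lborel)"
    by (simp add: emeasure_laplace_measure laplace_density_nonneg b ennreal_mult mult.assoc
        flip: nn_integral_cmult)
  also have "\<dots> \<le> (\<integral>\<^sup>+x. ennreal (laplace_density 0 b (x + d)) * indicator {c + d..} (x + d) \<partial>lborel)"
  proof (intro nn_integral_mono)
    fix x
    have "exp (- d / b) * laplace_density 0 b x \<le> laplace_density 0 b (x + d)"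
      using laplace_density_le_shift[OF b, of 0 x d] d b
      by (simp add: exp_minus field_simps)
    then show "ennreal (exp (- d / b) * laplace_density 0 b x) * indicator {c..} x
        \<le> ennreal (laplace_density 0 b (x + d)) * indicator {c + d..} (x + d)"
      by (simp add: indicator_def ennreal_leI)
  qed
  also have "\<dots> = emeasure (laplace_measure 0 b) {c + d..}"
    using nn_integral_real_affine[of "\<lambda>x. ennreal (laplace_density 0 b x) * indicator {c + d..} x" 1 d]
    by (simp add: emeasure_laplace_measure add.commute)
  finally show ?thesis
    by (simp add: lap_ge_def emeasure_eq_measure ennreal_mult[symmetric] del: ennreal_mult)
qed

section \<open>Pure differential privacy implies zero-concentrated differential privacy\<close>

lemma sinh_le_mult_cosh:
  fixes u :: real
  assumes "u \<ge> 0"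
  shows "sinh u \<le> u * cosh u"
proof -
  have "0 * cosh 0 - sinh 0 \<le> u * cosh u - sinh u"
  proof (rule DERIV_nonneg_imp_nondecreasing[OF assms])
    fix x :: real assume "0 \<le> x"
    have "((\<lambda>x. x * cosh x - sinh x) has_real_derivative x * sinh x) (at x)"
      by (auto intro!: derivative_eq_intros)
    then show "\<exists>y. ((\<lambda>x. x * cosh x - sinh x) has_real_derivative y) (at x) \<and> 0 \<le> y"
      using \<open>0 \<le> x\<close> by auto
  qed
  then show ?thesis by simp
qed

lemma cosh_mult_exp_square_antimono:
  fixes x y :: real
  assumes "0 \<le> x" "x \<le> y"
  shows "cosh y * exp (- (y\<^sup>2) / 2) \<le> cosh x * exp (- (x\<^sup>2) / 2)"
proof (rule DERIV_nonpos_imp_nonincreasing[OF assms(2)])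
  fix u assume "x \<le> u" "u \<le> y"
  have "((\<lambda>u. cosh u * exp (- (u\<^sup>2) / 2)) has_real_derivative
          exp (- (u\<^sup>2) / 2) * (sinh u - u * cosh u)) (at u)"
    by (auto intro!: derivative_eq_intros simp: algebra_simps)
  moreover have "exp (- (u\<^sup>2) / 2) * (sinh u - u * cosh u) \<le> 0"
    using sinh_le_mult_cosh[of u] \<open>x \<le> u\<close> assms(1) by (simp add: mult_nonneg_nonpos)
  ultimately show "\<exists>d. ((\<lambda>u. cosh u * exp (- (u\<^sup>2) / 2)) has_real_derivative d) (at u) \<and> d \<le> 0"
    by blast
qed

lemma cosh_ratio_le_exp:
  fixes x y :: real
  assumes "0 \<le> x" "x \<le> y"
  shows "cosh y / cosh x \<le> exp ((y\<^sup>2 - x\<^sup>2) / 2)"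
proof -
  have "cosh y * exp (- (y\<^sup>2) / 2) * exp (y\<^sup>2 / 2) \<le> cosh x * exp (- (x\<^sup>2) / 2) * exp (y\<^sup>2 / 2)"
    using cosh_mult_exp_square_antimono[OF assms] by (rule mult_right_mono) simp
  then have "cosh y \<le> cosh x * exp ((y\<^sup>2 - x\<^sup>2) / 2)"
    by (simp add: mult.assoc diff_divide_distrib flip: exp_add)
  then show ?thesis
    by (simp add: divide_le_eq mult.commute)
qed

lemma powr_le_secant:
  fixes a b w \<alpha> :: real
  assumes "0 < a" "a < b" "1 \<le> \<alpha>" "a \<le> w" "w \<le> b"
  shows "w powr \<alpha> \<le> a powr \<alpha> + (b powr \<alpha> - a powr \<alpha>) / (b - a) * (w - a)"
proof -
  have "convex_on {a..b} (\<lambda>x. x powr \<alpha>)"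
    using powr_convex[OF assms(3)] by (rule convex_on_subset) (use assms in auto)
  from convex_onD_Icc'[OF this, of w] show ?thesis
    using assms by simp
qed

lemma secant_powr_exp_at_one:
  fixes \<epsilon> \<alpha> :: real
  assumes "\<epsilon> > 0"
  shows "exp (- \<epsilon>) powr \<alpha> + (exp \<epsilon> powr \<alpha> - exp (- \<epsilon>) powr \<alpha>) / (exp \<epsilon> - exp (- \<epsilon>)) * (1 - exp (- \<epsilon>))
       = cosh ((\<alpha> - 1 / 2) * \<epsilon>) / cosh (\<epsilon> / 2)"
proof -
  define E where "E = exp (\<epsilon> / 2)"
  define A where "A = exp (\<alpha> * \<epsilon>)"
  have E: "E > 1" using assms by (simp add: E_def)
  have A: "A > 0" by (simp add: A_def)
  have exps: "exp \<epsilon> = E * E" "exp (- \<epsilon>) = 1 / (E * E)"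
    "exp \<epsilon> powr \<alpha> = A" "exp (- \<epsilon>) powr \<alpha> = 1 / A"
    "exp ((\<alpha> - 1 / 2) * \<epsilon>) = A / E" "exp (- ((\<alpha> - 1 / 2) * \<epsilon>)) = E / A"
    "exp (\<epsilon> / 2) = E" "exp (- (\<epsilon> / 2)) = 1 / E"
    by (simp_all add: E_def A_def powr_def algebra_simps exp_diff exp_minus inverse_eq_divide ln_div
        flip: exp_add)
  have "c / (F - 1 / F) * (1 - 1 / F) = c / (F + 1)" if "F > 1" for c F :: real
  proof -
    have "F - 1 / F = (1 - 1 / F) * (F + 1)" using that by (simp add: field_simps)
    moreover have "1 - 1 / F \<noteq> 0" using that by simp
    ultimately show ?thesis by simp
  qed
  from this[OF less_1_mult[OF E E]]
  have "exp (- \<epsilon>) powr \<alpha> + (exp \<epsilon> powr \<alpha> - exp (- \<epsilon>) powr \<alpha>) / (exp \<epsilon> - exp (- \<epsilon>)) * (1 - exp (- \<epsilon>))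
      = 1 / A + (A - 1 / A) / (E * E + 1)"
    by (simp only: exps(3,4)) (simp add: exps(1,2))
  also have "\<dots> = (A + E * E / A) / (E * E + 1)"
  proof -
    have "1 / A + (A - 1 / A) / D = (A + (D - 1) / A) / D" if "D > 0" for D
      using A that by (simp add: field_simps)
    then show ?thesis by (simp add: add_nonneg_pos)
  qed
  also have "\<dots> = (E * (A / E + E / A)) / (E * (E + 1 / E))"
    using E by (simp add: distrib_left)
  also have "\<dots> = (A / E + E / A) / (E + 1 / E)"
    using E by simp
  also have "\<dots> = cosh ((\<alpha> - 1 / 2) * \<epsilon>) / cosh (\<epsilon> / 2)"
  proof -
    have halves: "x / 2 / (y / 2) = x / y" for x y :: real
      by (simp add: field_split_simps)
    show ?thesis
      by (simp only: cosh_field_def exps halves)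
  qed
  finally show ?thesis .
qed

lemma secant_powr_exp_at_one_le:
  fixes \<epsilon> \<alpha> :: real
  assumes "\<epsilon> > 0" "\<alpha> \<ge> 1"
  shows "exp (- \<epsilon>) powr \<alpha> + (exp \<epsilon> powr \<alpha> - exp (- \<epsilon>) powr \<alpha>) / (exp \<epsilon> - exp (- \<epsilon>)) * (1 - exp (- \<epsilon>))
       \<le> exp (\<alpha> * (\<alpha> - 1) * \<epsilon>\<^sup>2 / 2)"
proof -
  have "cosh ((\<alpha> - 1 / 2) * \<epsilon>) / cosh (\<epsilon> / 2) \<le> exp ((((\<alpha> - 1 / 2) * \<epsilon>)\<^sup>2 - (\<epsilon> / 2)\<^sup>2) / 2)"
    using assms by (intro cosh_ratio_le_exp) (auto intro: mult_right_mono[of "1 / 2" "\<alpha> - 1 / 2", simplified])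
  also have "(((\<alpha> - 1 / 2) * \<epsilon>)\<^sup>2 - (\<epsilon> / 2)\<^sup>2) / 2 = \<alpha> * (\<alpha> - 1) * \<epsilon>\<^sup>2 / 2"
    by (simp add: power2_eq_square field_simps)
  finally show ?thesis
    using secant_powr_exp_at_one[OF assms(1)] by simp
qed

lemma nn_integral_powr_le_of_ratio_bounds:
  fixes p q :: "'b \<Rightarrow> real"
  assumes \<epsilon>: "\<epsilon> > 0" and \<alpha>: "\<alpha> > 1"
    and nonneg: "\<And>y. 0 \<le> p y" "\<And>y. 0 \<le> q y"
    and pq: "\<And>y. p y \<le> exp \<epsilon> * q y" and qp: "\<And>y. q y \<le> exp \<epsilon> * p y"
    and sum_p: "(\<integral>\<^sup>+y. ennreal (p y) \<partial>count_space UNIV) = 1"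
    and sum_q: "(\<integral>\<^sup>+y. ennreal (q y) \<partial>count_space UNIV) = 1"
  shows "(\<integral>\<^sup>+y. ennreal (p y powr \<alpha> * q y powr (1 - \<alpha>)) \<partial>count_space UNIV)
    \<le> exp (\<alpha> * (\<alpha> - 1) * \<epsilon>\<^sup>2 / 2)"
proof -
  define a where "a = exp (- \<epsilon>)"
  define b where "b = exp \<epsilon>"
  define B where "B = (b powr \<alpha> - a powr \<alpha>) / (b - a)"
  have ab: "0 < a" "a < b" using \<epsilon> by (auto simp: a_def b_def)
  have B: "B \<ge> 0"
    using ab \<alpha> by (auto simp: B_def intro!: divide_nonneg_pos powr_mono2)
  \<comment> \<open>the secant bound \<open>q \<ell>(p/q)\<close>, with its negative part moved left so that it can be summed in \<open>ennreal\<close>\<close>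
  have pointwise: "p y powr \<alpha> * q y powr (1 - \<alpha>) + B * a * q y \<le> a powr \<alpha> * q y + B * p y" for y
  proof (cases "q y = 0")
    case True
    then show ?thesis using pq[of y] nonneg[of y] by simp
  next
    case False
    then have q: "q y > 0" using nonneg(2)[of y] by simp
    define w where "w = p y / q y"
    have p: "p y = q y * w" using q by (simp add: w_def)
    have "a \<le> w" "w \<le> b"
      using qp[of y] pq[of y] q \<epsilon> by (auto simp: w_def a_def b_def exp_minus field_simps)
    have "p y powr \<alpha> * q y powr (1 - \<alpha>) = q y * w powr \<alpha>"
      using q nonneg(1)[of y] by (simp add: p powr_mult powr_diff field_simps)
    also have "\<dots> \<le> q y * (a powr \<alpha> + B * (w - a))"
      unfolding B_def using powr_le_secant[OF ab _ \<open>a \<le> w\<close> \<open>w \<le> b\<close>] \<alpha> q by simp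
    finally show ?thesis by (simp add: p algebra_simps)
  qed
  define S where "S = (\<integral>\<^sup>+y. ennreal (p y powr \<alpha> * q y powr (1 - \<alpha>)) \<partial>count_space UNIV)"
  have "S + ennreal (B * a) = (\<integral>\<^sup>+y. ennreal (p y powr \<alpha> * q y powr (1 - \<alpha>)) + ennreal (B * a) * ennreal (q y) \<partial>count_space UNIV)"
    by (simp add: S_def nn_integral_add nn_integral_cmult sum_q)
  also have "\<dots> \<le> (\<integral>\<^sup>+y. ennreal (a powr \<alpha>) * ennreal (q y) + ennreal B * ennreal (p y) \<partial>count_space UNIV)"
    using pointwise nonneg B ab
    by (intro nn_integral_mono) (simp add: mult.assoc flip: ennreal_plus ennreal_mult)
  also have "\<dots> = ennreal (a powr \<alpha> + B)"
    using B by (simp add: nn_integral_add nn_integral_cmult sum_p sum_q)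
  finally have "S + ennreal (B * a) \<le> ennreal (a powr \<alpha> + B)" .
  then have "S \<le> ennreal (a powr \<alpha> + B * (1 - a))"
    using B ab by (cases S) (auto simp: algebra_simps top_unique simp flip: ennreal_plus)
  also have "a powr \<alpha> + B * (1 - a) \<le> exp (\<alpha> * (\<alpha> - 1) * \<epsilon>\<^sup>2 / 2)"
    unfolding a_def B_def b_def using secant_powr_exp_at_one_le[OF \<epsilon>] \<alpha> by simp
  finally show ?thesis
    by (simp add: S_def ennreal_leI)
qed

lemma nn_integral_measure_singleton:
  fixes P :: "'b::countable measure"
  assumes "prob_space P" "sets P = sets (count_space UNIV)"
  shows "(\<integral>\<^sup>+y. ennreal (measure P {y}) \<partial>count_space UNIV) = 1"
proof -
  interpret prob_space P by fact
  have "(\<integral>\<^sup>+y. ennreal (measure P {y}) \<partial>count_space UNIV) = (\<integral>\<^sup>+y. emeasure P {y} \<partial>count_space UNIV)"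
    by (simp add: emeasure_eq_measure)
  also have "\<dots> = emeasure P UNIV"
    by (rule emeasure_countable_singleton[symmetric]) (simp_all add: assms(2))
  also have "\<dots> = emeasure P (space P)"
    using sets_eq_imp_space_eq[OF assms(2)] by simp
  finally show ?thesis
    by (simp add: emeasure_space_1)
qed

lemma renyi_div_le_of_pure_dp:
  fixes P Q :: "'b::countable measure"
  assumes "prob_space P" "sets P = sets (count_space UNIV)"
    and "prob_space Q" "sets Q = sets (count_space UNIV)"
    and \<epsilon>: "\<epsilon> > 0" and \<alpha>: "\<alpha> > 1"
    and PQ: "\<And>y. measure P {y} \<le> exp \<epsilon> * measure Q {y}"
    and QP: "\<And>y. measure Q {y} \<le> exp \<epsilon> * measure P {y}"
  shows "renyi_div \<alpha> P Q \<le> ereal (\<alpha> * \<epsilon>\<^sup>2 / 2)"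
proof -
  define S where "S = (\<integral>\<^sup>+y. ennreal (measure P {y} powr \<alpha> * measure Q {y} powr (1 - \<alpha>)) \<partial>count_space UNIV)"
  have S: "S \<le> exp (\<alpha> * (\<alpha> - 1) * \<epsilon>\<^sup>2 / 2)"
    unfolding S_def using \<epsilon> \<alpha> PQ QP
    by (intro nn_integral_powr_le_of_ratio_bounds nn_integral_measure_singleton assms) auto
  then obtain s where s: "S = ennreal s" "0 \<le> s" "s \<le> exp (\<alpha> * (\<alpha> - 1) * \<epsilon>\<^sup>2 / 2)"
    by (cases S) (auto simp: top_unique)
  have "ln s / (\<alpha> - 1) \<le> \<alpha> * \<epsilon>\<^sup>2 / 2"
  proof (cases "s = 0")
    case False
    then have "ln s \<le> ln (exp (\<alpha> * (\<alpha> - 1) * \<epsilon>\<^sup>2 / 2))"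
      using s by (subst ln_le_cancel_iff) auto
    then show ?thesis
      using \<alpha> by (simp add: divide_le_eq algebra_simps)
  qed (use \<alpha> in simp)
  moreover have "\<not> (\<exists>y. measure P {y} > 0 \<and> measure Q {y} = 0)"
  proof (intro notI, elim exE conjE)
    fix y assume "measure P {y} > 0" "measure Q {y} = 0"
    with PQ[of y] show False by simp
  qed
  ultimately show ?thesis
    unfolding renyi_div_def Let_def S_def[symmetric] s(1) using s(2) by simp
qed

section \<open>The sampling loop\<close>

lemma set_spmf_svt_loop: "set_spmf (svt_loop logits ppub s \<sigma> \<tau> D t x) \<subseteq> {y. prefix x y}"
proof (induction arbitrary: x rule: svt_loop.fixp_induct)
  case 1
  show ?case
    by (intro admissible_all ccpo_class.admissible_leI mcont_const)
       (simp add: curry_def; intro mcont2mcont_set_spmf mcont_call)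
next
  case 2
  show ?case by simp
next
  case (3 loop)
  show ?case
    using "3.IH" by (fastforce simp: Let_def set_bind_spmf prefix_def simp del: bind_spmf_of_pmf split: if_splits)
qed

lemma softmax_nonneg: "softmax z i \<ge> 0"
  by (simp add: softmax_def sum_nonneg)

lemma sum_softmax: "(\<Sum>i\<in>UNIV. softmax (z :: 'a::finite \<Rightarrow> real) i) = 1"
proof -
  have "(\<Sum>j\<in>UNIV. exp (z j)) > 0" by (intro sum_pos) auto
  then show ?thesis by (simp add: softmax_def flip: sum_divide_distrib)
qed

lemma dist_d_insert_le:
  fixes Z :: "('a::finite \<Rightarrow> real) set"
  assumes "finite Z" "s > 0"
  shows "\<bar>dist_d s (insert z' Z) z - dist_d s Z z\<bar> \<le> 1 / s"
proof (cases "z' \<in> Z")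
  case False
  define a where "a i = (1 / s) * (\<Sum>z''\<in>Z. softmax z'' i) - softmax z i" for i
  define e where "e i = (1 / s) * softmax z' i" for i
  have e: "e i \<ge> 0" for i
    using assms(2) by (simp add: e_def softmax_nonneg)
  have "dist_d s (insert z' Z) z = (\<Sum>i\<in>UNIV. \<bar>a i + e i\<bar>)"
    using assms(1) False by (simp add: dist_d_def a_def e_def algebra_simps)
  moreover have "dist_d s Z z = (\<Sum>i\<in>UNIV. \<bar>a i\<bar>)"
    by (simp add: dist_d_def a_def)
  moreover have "(\<Sum>i\<in>UNIV. e i) = 1 / s"
    by (simp add: e_def sum_softmax flip: sum_divide_distrib)
  moreover have "\<bar>\<bar>a i + e i\<bar> - \<bar>a i\<bar>\<bar> \<le> e i" for i
    using e[of i] by linarith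
  ultimately show ?thesis
    using sum_abs[of "\<lambda>i. \<bar>a i + e i\<bar> - \<bar>a i\<bar>" UNIV] sum_mono[of UNIV "\<lambda>i. \<bar>\<bar>a i + e i\<bar> - \<bar>a i\<bar>\<bar>" e]
    by (simp add: sum_subtractf)
qed (use assms in \<open>simp add: insert_absorb\<close>)

lemma neighbors_sym: "neighbors D D' \<Longrightarrow> neighbors D' D"
  by (auto simp: neighbors_def)

context
  fixes logits :: "'a::finite list \<Rightarrow> 'a \<Rightarrow> real" and ppub :: "'a list" and s \<sigma> \<tau> :: real
begin

definition svt_score :: "'a list set \<Rightarrow> 'a list \<Rightarrow> real" where
  "svt_score D x = dist_d s ((\<lambda>p. logits (p @ x)) ` D) (logits (ppub @ x))"

definition halt_prob :: "'a list set \<Rightarrow> real \<Rightarrow> 'a list \<Rightarrow> real" where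
  "halt_prob D t x = lap_ge (2 * \<sigma>) (t - svt_score D x)"

definition next_token_pmf :: "'a list \<Rightarrow> 'a pmf" where
  "next_token_pmf x = softmax_pmf (\<lambda>i. logits (ppub @ x) i / \<tau>)"

fun path_prob :: "'a list set \<Rightarrow> real \<Rightarrow> 'a list \<Rightarrow> 'a list \<Rightarrow> real" where
  "path_prob D t x [] = halt_prob D t x"
| "path_prob D t x (z # w) = (1 - halt_prob D t x) * pmf (next_token_pmf x) z * path_prob D t (x @ [z]) w"

lemma svt_loop_unfold:
  "svt_loop logits ppub s \<sigma> \<tau> D t x =
     spmf_of_pmf (bernoulli_pmf (halt_prob D t x)) \<bind>
       (\<lambda>stop. if stop then return_spmf x
               else spmf_of_pmf (next_token_pmf x) \<bind> (\<lambda>z. svt_loop logits ppub s \<sigma> \<tau> D t (x @ [z])))"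
  by (subst svt_loop.simps) (simp only: Let_def halt_prob_def svt_score_def next_token_pmf_def)

lemma svt_score_nonneg: "svt_score D x \<ge> 0"
  by (simp add: svt_score_def dist_d_def sum_nonneg)

lemma svt_score_neighbors:
  assumes "s > 0" "finite D" "finite D'" "neighbors D D'"
  shows "\<bar>svt_score D x - svt_score D' x\<bar> \<le> 1 / s"
proof -
  have image_insert: "(\<lambda>p. logits (p @ x)) ` (D \<union> {q}) = insert (logits (q @ x)) ((\<lambda>p. logits (p @ x)) ` D)"
    for D q by auto
  from assms(4) obtain q where "D = D' \<union> {q} \<or> D' = D \<union> {q}"
    by (auto simp: neighbors_def)
  then show ?thesis
    using dist_d_insert_le[OF finite_imageI[OF assms(2)] assms(1)]
      dist_d_insert_le[OF finite_imageI[OF assms(3)] assms(1)]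
    by (auto simp: svt_score_def image_insert abs_minus_commute)
qed

context
  assumes \<sigma>: "\<sigma> > 0"
begin

lemma halt_prob_nonneg: "0 \<le> halt_prob D t x"
  by (simp add: halt_prob_def lap_ge_def)

lemma halt_prob_le_1: "halt_prob D t x \<le> 1"
  using \<sigma> by (simp add: halt_prob_def lap_ge_le_1)

lemma lap_ge_le_halt_prob: "lap_ge (2 * \<sigma>) t \<le> halt_prob D t x"
  unfolding halt_prob_def using \<sigma> svt_score_nonneg[of D x] by (intro lap_ge_antimono) auto

lemma spmf_svt_loop:
  "spmf (svt_loop logits ppub s \<sigma> \<tau> D t x) y =
     halt_prob D t x * indicator {x} y +
     (1 - halt_prob D t x) * (\<Sum>z\<in>UNIV. pmf (next_token_pmf x) z * spmf (svt_loop logits ppub s \<sigma> \<tau> D t (x @ [z])) y)"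
  using halt_prob_nonneg[of D t x] halt_prob_le_1[of D t x]
  by (subst svt_loop_unfold)
     (simp add: pmf_bind integral_measure_pmf[of UNIV] UNIV_bool mult.commute indicator_def)

lemma weight_svt_loop:
  "weight_spmf (svt_loop logits ppub s \<sigma> \<tau> D t x) =
     halt_prob D t x +
     (1 - halt_prob D t x) * (\<Sum>z\<in>UNIV. pmf (next_token_pmf x) z * weight_spmf (svt_loop logits ppub s \<sigma> \<tau> D t (x @ [z])))"
  using halt_prob_nonneg[of D t x] halt_prob_le_1[of D t x]
  by (simp only: svt_loop_unfold[of D t x])
     (simp add: weight_bind_spmf o_def integral_measure_pmf[of UNIV] UNIV_bool mult.commute
       del: bind_spmf_of_pmf)

lemma weight_svt_loop_ge: "1 - (1 - lap_ge (2 * \<sigma>) t) ^ n \<le> weight_spmf (svt_loop logits ppub s \<sigma> \<tau> D t x)"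
proof (induction n arbitrary: x)
  case 0
  then show ?case by (simp add: weight_spmf_nonneg)
next
  case (Suc n)
  define q where "q = lap_ge (2 * \<sigma>) t"
  define h where "h = halt_prob D t x"
  have q: "q \<le> 1" using \<sigma> by (simp add: q_def lap_ge_le_1)
  have h: "q \<le> h" "h \<le> 1" by (simp_all add: q_def h_def lap_ge_le_halt_prob halt_prob_le_1)
  have "1 - (1 - q) ^ n = (\<Sum>z\<in>UNIV. pmf (next_token_pmf x) z * (1 - (1 - q) ^ n))"
    by (simp add: sum_pmf_eq_1 flip: sum_distrib_right)
  also have "\<dots> \<le> (\<Sum>z\<in>UNIV. pmf (next_token_pmf x) z * weight_spmf (svt_loop logits ppub s \<sigma> \<tau> D t (x @ [z])))"
    using Suc.IH by (intro sum_mono mult_left_mono) (auto simp: q_def)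
  finally have IH: "1 - (1 - q) ^ n \<le> \<dots>" .
  have "1 - (1 - q) ^ Suc n \<le> h + (1 - h) * (1 - (1 - q) ^ n)"
    using mult_right_mono[of "1 - h" "1 - q" "(1 - q) ^ n"] h q by (simp add: algebra_simps)
  also have "\<dots> \<le> weight_spmf (svt_loop logits ppub s \<sigma> \<tau> D t x)"
    unfolding weight_svt_loop[of D t x] h_def[symmetric] using IH h by (intro add_left_mono mult_left_mono) auto
  finally show ?case by (simp add: q_def)
qed

lemma lossless_svt_loop: "lossless_spmf (svt_loop logits ppub s \<sigma> \<tau> D t x)"
proof -
  define q where "q = lap_ge (2 * \<sigma>) t"
  have q: "0 < q" "q \<le> 1" using \<sigma> by (simp_all add: q_def lap_ge_pos lap_ge_le_1)
  have "(\<lambda>n. 1 - (1 - q) ^ n) \<longlonglongrightarrow> 1 - 0"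
    using q by (intro tendsto_diff tendsto_const LIMSEQ_power_zero) auto
  then have "1 \<le> weight_spmf (svt_loop logits ppub s \<sigma> \<tau> D t x)"
    by (intro LIMSEQ_le_const2[of _ 1]) (auto simp: q_def weight_svt_loop_ge)
  then show ?thesis
    using weight_spmf_le_1[of "svt_loop logits ppub s \<sigma> \<tau> D t x"] by (simp add: lossless_spmf_def)
qed

lemma spmf_svt_loop_not_prefix: "\<not> prefix x y \<Longrightarrow> spmf (svt_loop logits ppub s \<sigma> \<tau> D t x) y = 0"
  using set_spmf_svt_loop by (fastforce simp: spmf_eq_0_set_spmf)

lemma spmf_svt_loop_append: "spmf (svt_loop logits ppub s \<sigma> \<tau> D t x) (x @ w) = path_prob D t x w"
proof (induction w arbitrary: x)
  case Nil
  then show ?case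
    by (subst spmf_svt_loop) (simp add: spmf_svt_loop_not_prefix)
next
  case (Cons z w)
  have "pmf (next_token_pmf x) z' * spmf (svt_loop logits ppub s \<sigma> \<tau> D t (x @ [z'])) (x @ z # w)
      = (if z' = z then pmf (next_token_pmf x) z * path_prob D t (x @ [z]) w else 0)" for z'
    using Cons.IH[of "x @ [z]"] by (auto simp: spmf_svt_loop_not_prefix)
  then show ?case
    by (subst spmf_svt_loop) simp
qed

lemma path_prob_nonneg: "0 \<le> path_prob D t x w"
  by (induction w arbitrary: x) (simp_all add: halt_prob_nonneg halt_prob_le_1)

lemma borel_measurable_spmf_svt_loop:
  "(\<lambda>t. spmf (svt_loop logits ppub s \<sigma> \<tau> D t x) y) \<in> borel_measurable borel"
proof (cases "prefix x y")
  case True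
  then obtain w where y: "y = x @ w"
    by (auto simp: prefix_def)
  have [measurable]: "(\<lambda>t. halt_prob D t x') \<in> borel_measurable borel" for x'
    unfolding halt_prob_def using \<sigma> by (intro measurable_compose[OF _ borel_measurable_lap_ge]) simp_all
  have "(\<lambda>t. path_prob D t x' w) \<in> borel_measurable borel" for x'
    by (induction w arbitrary: x') simp_all
  then show ?thesis
    by (simp add: y spmf_svt_loop_append)
qed (simp add: spmf_svt_loop_not_prefix)

context
  fixes D D' :: "'a list set" and \<Delta> :: real
  assumes \<Delta>: "\<Delta> \<ge> 0"
    and score: "\<And>x. \<bar>svt_score D x - svt_score D' x\<bar> \<le> \<Delta>"
begin

lemma halt_prob_shifted_le: "halt_prob D' (t + \<Delta>) x \<le> halt_prob D t x"
  unfolding halt_prob_def using \<sigma> score[of x] by (intro lap_ge_antimono) auto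

lemma halt_prob_le_exp_shifted: "halt_prob D t x \<le> exp (\<Delta> / \<sigma>) * halt_prob D' (t + \<Delta>) x"
proof -
  define d where "d = svt_score D x"
  define d' where "d' = svt_score D' x"
  have "exp (- (2 * \<Delta>) / (2 * \<sigma>)) * lap_ge (2 * \<sigma>) (t - d) \<le> lap_ge (2 * \<sigma>) (t - d + 2 * \<Delta>)"
    using \<sigma> \<Delta> by (intro lap_ge_shift) auto
  also have "\<dots> \<le> lap_ge (2 * \<sigma>) (t + \<Delta> - d')"
    using \<sigma> score[of x] by (intro lap_ge_antimono) (auto simp: d_def d'_def)
  finally have "exp (- \<Delta> / \<sigma>) * halt_prob D t x \<le> halt_prob D' (t + \<Delta>) x"
    using \<sigma> by (simp add: halt_prob_def d_def d'_def)
  then have "exp (\<Delta> / \<sigma>) * (exp (- \<Delta> / \<sigma>) * halt_prob D t x) \<le> exp (\<Delta> / \<sigma>) * halt_prob D' (t + \<Delta>) x"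
    by (rule mult_left_mono) simp
  then show ?thesis
    by (simp add: mult.assoc[symmetric] flip: exp_add)
qed

lemma path_prob_le_exp_shifted: "path_prob D t x w \<le> exp (\<Delta> / \<sigma>) * path_prob D' (t + \<Delta>) x w"
proof (induction w arbitrary: x)
  case Nil
  then show ?case by (simp add: halt_prob_le_exp_shifted)
next
  case (Cons z w)
  have "(1 - halt_prob D t x) * pmf (next_token_pmf x) z * path_prob D t (x @ [z]) w
      \<le> (1 - halt_prob D' (t + \<Delta>) x) * pmf (next_token_pmf x) z * (exp (\<Delta> / \<sigma>) * path_prob D' (t + \<Delta>) (x @ [z]) w)"
    using halt_prob_shifted_le[of t x] halt_prob_le_1[of D t x]
    by (intro mult_mono Cons.IH) (auto simp: path_prob_nonneg)
  then show ?case by (simp add: algebra_simps)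
qed

lemma spmf_svt_loop_le_exp_shifted:
  "spmf (svt_loop logits ppub s \<sigma> \<tau> D t x) y \<le> exp (\<Delta> / \<sigma>) * spmf (svt_loop logits ppub s \<sigma> \<tau> D' (t + \<Delta>) x) y"
  by (cases "prefix x y")
     (auto simp: prefix_def spmf_svt_loop_append path_prob_le_exp_shifted spmf_svt_loop_not_prefix)

end

end

end

section \<open>The mechanism\<close>

lemma measurable_measure_spmf_family:
  fixes K :: "'c \<Rightarrow> 'b::countable spmf"
  assumes K: "\<And>y. (\<lambda>t. spmf (K t) y) \<in> borel_measurable M"
  shows "(\<lambda>t. measure_spmf (K t)) \<in> measurable M (subprob_algebra (count_space UNIV))"
proof (rule measurable_subprob_algebra)
  fix A :: "'b set"
  interpret sigma_finite_measure "count_space (UNIV :: 'b set)"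
    by (rule sigma_finite_measure_count_space_countable) simp
  have "(\<lambda>(t, y). ennreal (spmf (K t) y) * indicator A y) \<in> borel_measurable (M \<Otimes>\<^sub>M count_space UNIV)"
    unfolding case_prod_beta
    by (rule measurable_compose_countable'[where g = snd and I = UNIV])
       (use K[measurable] in measurable)
  then have "(\<lambda>t. \<integral>\<^sup>+y. ennreal (spmf (K t) y) * indicator A y \<partial>count_space UNIV) \<in> borel_measurable M"
    by (rule borel_measurable_nn_integral)
  then show "(\<lambda>t. emeasure (measure_spmf (K t)) A) \<in> borel_measurable M"
    by (simp add: nn_integral_measure_spmf flip: nn_integral_indicator)
qed simp_all

context
  fixes logits :: "'a::finite list \<Rightarrow> 'a \<Rightarrow> real" and ppub x0 :: "'a list" and s \<sigma> \<tau> \<theta> :: real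
  assumes \<sigma>: "\<sigma> > 0"
begin

declare borel_measurable_spmf_svt_loop[OF \<sigma>, measurable]

lemma measurable_svt_loop_kernel:
  "(\<lambda>t. measure_spmf (svt_loop logits ppub s \<sigma> \<tau> D t x0))
     \<in> measurable (laplace_measure \<theta> \<sigma>) (subprob_algebra (count_space UNIV))"
  by (subst measurable_cong_sets[OF sets_laplace_measure refl]) (rule measurable_measure_spmf_family; measurable)

lemma emeasure_svt_mech:
  "emeasure (svt_mech logits ppub s \<sigma> \<tau> \<theta> x0 D) A
     = (\<integral>\<^sup>+t. emeasure (measure_spmf (svt_loop logits ppub s \<sigma> \<tau> D t x0)) A \<partial>laplace_measure \<theta> \<sigma>)"
  unfolding svt_mech_def
  by (rule emeasure_bind[OF _ measurable_svt_loop_kernel]) (simp_all add: laplace_measure_def)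

lemma sets_svt_mech: "sets (svt_mech logits ppub s \<sigma> \<tau> \<theta> x0 D) = sets (count_space UNIV)"
  unfolding svt_mech_def by (rule sets_bind) (simp_all add: laplace_measure_def)

lemma prob_space_svt_mech: "prob_space (svt_mech logits ppub s \<sigma> \<tau> \<theta> x0 D)"
proof
  interpret laplace: prob_space "laplace_measure \<theta> \<sigma>"
    using \<sigma> by (rule prob_space_laplace_measure)
  have "emeasure (measure_spmf (svt_loop logits ppub s \<sigma> \<tau> D t x0)) UNIV = 1" for t
    using lossless_weight_spmfD[OF lossless_svt_loop[OF \<sigma>]]
    by (simp add: measure_spmf.emeasure_eq_measure weight_spmf_def)
  then have "emeasure (svt_mech logits ppub s \<sigma> \<tau> \<theta> x0 D) UNIV = emeasure (laplace_measure \<theta> \<sigma>) UNIV"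
    by (simp add: emeasure_svt_mech laplace_measure_def)
  then show "emeasure (svt_mech logits ppub s \<sigma> \<tau> \<theta> x0 D) (space (svt_mech logits ppub s \<sigma> \<tau> \<theta> x0 D)) = 1"
    using sets_eq_imp_space_eq[OF sets_svt_mech] laplace.emeasure_space_1 by (simp add: laplace_measure_def)
qed

lemma emeasure_svt_mech_singleton:
  "emeasure (svt_mech logits ppub s \<sigma> \<tau> \<theta> x0 D) {y}
     = (\<integral>\<^sup>+t. ennreal (laplace_density \<theta> \<sigma> t * spmf (svt_loop logits ppub s \<sigma> \<tau> D t x0) y) \<partial>lborel)"
  by (simp add: emeasure_svt_mech emeasure_spmf_single laplace_measure_eq_density nn_integral_density
      laplace_density_nonneg[OF \<sigma>] ennreal_mult)

context
  fixes D D' :: "'a list set" and \<Delta> :: real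
  assumes \<Delta>: "\<Delta> \<ge> 0"
    and score: "\<And>x. \<bar>svt_score logits ppub s D x - svt_score logits ppub s D' x\<bar> \<le> \<Delta>"
begin

lemma laplace_density_mult_spmf_svt_loop_le:
  "laplace_density \<theta> \<sigma> t * spmf (svt_loop logits ppub s \<sigma> \<tau> D t x0) y
     \<le> exp (2 * \<Delta> / \<sigma>) * (laplace_density \<theta> \<sigma> (t + \<Delta>) * spmf (svt_loop logits ppub s \<sigma> \<tau> D' (t + \<Delta>) x0) y)"
proof -
  have "laplace_density \<theta> \<sigma> t \<le> exp (\<Delta> / \<sigma>) * laplace_density \<theta> \<sigma> (t + \<Delta>)"
    using laplace_density_le_shift[OF \<sigma>, of \<theta> t \<Delta>] \<Delta> by simp
  moreover have "spmf (svt_loop logits ppub s \<sigma> \<tau> D t x0) y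
      \<le> exp (\<Delta> / \<sigma>) * spmf (svt_loop logits ppub s \<sigma> \<tau> D' (t + \<Delta>) x0) y"
    by (rule spmf_svt_loop_le_exp_shifted[OF \<sigma> \<Delta> score])
  ultimately have "laplace_density \<theta> \<sigma> t * spmf (svt_loop logits ppub s \<sigma> \<tau> D t x0) y
      \<le> (exp (\<Delta> / \<sigma>) * laplace_density \<theta> \<sigma> (t + \<Delta>))
        * (exp (\<Delta> / \<sigma>) * spmf (svt_loop logits ppub s \<sigma> \<tau> D' (t + \<Delta>) x0) y)"
    by (rule mult_mono) (simp_all add: laplace_density_nonneg[OF \<sigma>])
  also have "exp (\<Delta> / \<sigma>) * laplace_density \<theta> \<sigma> (t + \<Delta>) * (exp (\<Delta> / \<sigma>) * spmf (svt_loop logits ppub s \<sigma> \<tau> D' (t + \<Delta>) x0) y)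
      = exp (2 * \<Delta> / \<sigma>) * (laplace_density \<theta> \<sigma> (t + \<Delta>) * spmf (svt_loop logits ppub s \<sigma> \<tau> D' (t + \<Delta>) x0) y)"
    by (simp add: mult_ac flip: exp_add)
  finally show ?thesis .
qed

lemma measure_svt_mech_singleton_le:
  "measure (svt_mech logits ppub s \<sigma> \<tau> \<theta> x0 D) {y}
     \<le> exp (2 * \<Delta> / \<sigma>) * measure (svt_mech logits ppub s \<sigma> \<tau> \<theta> x0 D') {y}"
proof -
  interpret P: prob_space "svt_mech logits ppub s \<sigma> \<tau> \<theta> x0 D"
    by (rule prob_space_svt_mech)
  interpret P': prob_space "svt_mech logits ppub s \<sigma> \<tau> \<theta> x0 D'"
    by (rule prob_space_svt_mech)
  define c where "c = exp (2 * \<Delta> / \<sigma>)"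
  define f where "f t = laplace_density \<theta> \<sigma> t * spmf (svt_loop logits ppub s \<sigma> \<tau> D' t x0) y" for t
  have "emeasure (svt_mech logits ppub s \<sigma> \<tau> \<theta> x0 D) {y} \<le> (\<integral>\<^sup>+t. ennreal c * f (\<Delta> + t) \<partial>lborel)"
    unfolding emeasure_svt_mech_singleton using laplace_density_mult_spmf_svt_loop_le
    by (intro nn_integral_mono) (simp add: ennreal_leI f_def c_def add.commute flip: ennreal_mult')
  also have "\<dots> = ennreal c * (\<integral>\<^sup>+t. f t \<partial>lborel)"
  proof -
    have "(\<lambda>t. ennreal (f t)) \<in> borel_measurable borel"
      unfolding f_def by measurable
    then show ?thesis
      using nn_integral_real_affine[of "\<lambda>t. ennreal (f t)" 1 \<Delta>] by (simp add: nn_integral_cmult)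
  qed
  also have "\<dots> = ennreal c * emeasure (svt_mech logits ppub s \<sigma> \<tau> \<theta> x0 D') {y}"
    by (simp add: emeasure_svt_mech_singleton f_def)
  finally have "ennreal (measure (svt_mech logits ppub s \<sigma> \<tau> \<theta> x0 D) {y})
      \<le> ennreal (c * measure (svt_mech logits ppub s \<sigma> \<tau> \<theta> x0 D') {y})"
    by (simp add: P.emeasure_eq_measure P'.emeasure_eq_measure c_def flip: ennreal_mult')
  then show ?thesis
    by (simp add: c_def)
qed

end

end

theorem mainTheorem5:
  fixes logits :: "'a::finite list \<Rightarrow> 'a \<Rightarrow> real"
    and ppub x0 :: "'a list"
    and s \<sigma> \<tau> \<theta> :: real
  assumes "s > 0" and "\<sigma> > 0" and "\<tau> > 0"
  shows "zCDP (svt_mech logits ppub s \<sigma> \<tau> \<theta> x0) (2 / (s * \<sigma>)^2)"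
  unfolding zCDP_def
proof (intro allI impI, elim conjE)
  fix \<alpha> :: real and D D' :: "'a list set"
  assume "\<alpha> > 1" and D: "finite D" "finite D'" "neighbors D D'"
  let ?M = "svt_mech logits ppub s \<sigma> \<tau> \<theta> x0"
  define \<epsilon> where "\<epsilon> = 2 * (1 / s) / \<sigma>"
  have \<Delta>: "1 / s \<ge> 0" and \<epsilon>: "\<epsilon> > 0"
    using assms by (simp_all add: \<epsilon>_def)
  have pure_dp: "measure (?M A) {y} \<le> exp \<epsilon> * measure (?M B) {y}"
    if "finite A" "finite B" "neighbors A B" for A B y
    unfolding \<epsilon>_def
    by (rule measure_svt_mech_singleton_le[OF \<open>\<sigma> > 0\<close> \<Delta> svt_score_neighbors[OF \<open>s > 0\<close> that]])
  have "renyi_div \<alpha> (?M D) (?M D') \<le> ereal (\<alpha> * \<epsilon>\<^sup>2 / 2)"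
    using \<open>\<sigma> > 0\<close> \<epsilon> \<open>\<alpha> > 1\<close> pure_dp[OF D] pure_dp[OF D(2,1) neighbors_sym[OF D(3)]]
    by (intro renyi_div_le_of_pure_dp prob_space_svt_mech sets_svt_mech)
  also have "\<alpha> * \<epsilon>\<^sup>2 / 2 = 2 / (s * \<sigma>)\<^sup>2 * \<alpha>"
    by (simp add: \<epsilon>_def power2_eq_square)
  finally show "renyi_div \<alpha> (?M D) (?M D') \<le> ereal (2 / (s * \<sigma>)\<^sup>2 * \<alpha>)" .
qed

end
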